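(* Let $\alpha,\beta,\gamma,\delta,\varepsilon\in\mathbb{C}$ with $\gamma+\delta=2$, $1+\alpha+\beta=\gamma+\delta+\varepsilon$, $\alpha\beta\neq0$, $\gamma+\varepsilon\notin\{0,-1,-2,\dots\}$, $\operatorname{Re}\gamma>1$, and assume $(\gamma+\alpha)/2$ and $(\gamma+\beta)/2$ are not in $\{0,-1,-2,\dots\}$. Let $$a_k=\frac{(\varepsilon/2)_k\,((\gamma+\varepsilon-\alpha)/2)_k\,((\gamma+\varepsilon-\beta)/2)_k}{k!\,((\gamma+\varepsilon)/2)_k\,((1+\gamma+\varepsilon)/2)_k}.$$ Then the series $u(1):=\sum_{k=0}^\infty a_k\,{}_2F_1(\alpha,\beta;\gamma+\varepsilon+2k;1)$ converges and $$u(1)=\frac{\Gamma(\gamma+\varepsilon)\Gamma(\gamma-1)}{\Gamma(\gamma+\varepsilon-\alpha)\Gamma(\gamma-1+\alpha)}\;{}_3F_2\Big(\tfrac{\gamma-1}{2},\tfrac{\gamma}{2},\tfrac{\varepsilon}{2};\tfrac{\gamma+\alpha}{2},\tfrac{\gamma+\beta}{2};1\Big).$$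
   Context: $(x)_k$ is the Pochhammer symbol; ${}_2F_1(\alpha,\beta;c;1)$ is the value of the Gauss hypergeometric series at $z=1$ (convergent when $\operatorname{Re}(c-\alpha-\beta)>0$); ${}_3F_2(a_1,a_2,a_3;b_1,b_2;x)=\sum_{k\ge0}\frac{(a_1)_k(a_2)_k(a_3)_k}{(b_1)_k(b_2)_k k!}x^k$ is Clausen's series; $1/\Gamma$ at a pole is interpreted as $0$. (The function $\sum_k a_k\,{}_2F_1(\alpha,\beta;\gamma+\varepsilon+2k;z)$ is a solution of the general Heun equation with $a=1/2$ and $q=\alpha\beta/2+(1-\delta)\varepsilon/2$.) *)

theory Defs
  imports "HOL-Analysis.Analysis"
begin

definition hyp2F1_term :: "complex \<Rightarrow> complex \<Rightarrow> complex \<Rightarrow> nat \<Rightarrow> complex" where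
  "hyp2F1_term a b c n = pochhammer a n * pochhammer b n / (pochhammer c n * fact n)"

definition hyp2F1_at1 :: "complex \<Rightarrow> complex \<Rightarrow> complex \<Rightarrow> complex" where
  "hyp2F1_at1 a b c = (\<Sum>n. hyp2F1_term a b c n)"

definition hyp3F2_term :: "complex \<Rightarrow> complex \<Rightarrow> complex \<Rightarrow> complex \<Rightarrow> complex \<Rightarrow> complex \<Rightarrow> nat \<Rightarrow> complex" where
  "hyp3F2_term a1 a2 a3 b1 b2 x k =
     pochhammer a1 k * pochhammer a2 k * pochhammer a3 k / (pochhammer b1 k * pochhammer b2 k * fact k) * x ^ k"

definition hyp3F2 :: "complex \<Rightarrow> complex \<Rightarrow> complex \<Rightarrow> complex \<Rightarrow> complex \<Rightarrow> complex \<Rightarrow> complex" where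
  "hyp3F2 a1 a2 a3 b1 b2 x = (\<Sum>k. hyp3F2_term a1 a2 a3 b1 b2 x k)"

end

theory Submission
  imports Defs
begin

text \<open>By Gauss's summation theorem every \<open>\<^sub>2F\<^sub>1(\<alpha>, \<beta>; \<gamma> + \<epsilon> + 2k; 1)\<close> is a quotient of
  Gamma values. Writing them through Pochhammer symbols of length \<open>2k\<close> and halving these by
  the duplication formula \<open>(w)\<^sub>2\<^sub>k = 4\<^sup>k (w/2)\<^sub>k ((w+1)/2)\<^sub>k\<close>, the \<open>k\<close>-th summand becomes a fixed
  Gamma factor times the \<open>k\<close>-th term of the \<open>\<^sub>3F\<^sub>2\<close> series, which converges because its
  parameter excess is \<open>1\<close>.

  Gauss's theorem itself follows by iterating the contiguous relation
  \<open>c (c - a - b) F(c) = (c - a) (c - b) F(c + 1)\<close> and letting the shift \<open>c + m\<close> tend to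
  infinity: the accumulated Pochhammer quotient converges to the Gamma quotient by Euler's
  product formula, and \<open>F(c + m) \<rightarrow> 1\<close> because its tail is bounded by a constant times \<open>1 / Re (c + m)\<close>.\<close>

lemma not_nonpos_Ints_add_of_nat:
  fixes c :: complex
  assumes "c \<notin> \<int>\<^sub>\<le>\<^sub>0"
  shows "c + of_nat m \<notin> \<int>\<^sub>\<le>\<^sub>0"
  using nonpos_Ints_diff_Nats[of "c + of_nat m" "of_nat m"] assms by auto

lemma not_nonpos_Ints_if_Re_pos:
  fixes z :: complex
  assumes "Re z > 0"
  shows "z \<notin> \<int>\<^sub>\<le>\<^sub>0"
  using assms by (auto elim!: nonpos_Ints_cases')

lemma pochhammer_Suc_eq_rGamma_series:
  "pochhammer (z :: complex) (Suc n) = rGamma_series z n * (fact n * exp (z * of_real (ln (of_nat n))))"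
  by (simp add: rGamma_series_def)

lemma norm_pochhammer_ratio_bound:
  fixes a b :: complex
  assumes b: "b \<notin> \<int>\<^sub>\<le>\<^sub>0"
  shows "\<exists>C. eventually (\<lambda>n. norm (pochhammer a (Suc n) / pochhammer b (Suc n))
                               \<le> C * real n powr (Re a - Re b)) sequentially"
proof -
  obtain M where M: "M > 0" "\<And>n. norm (rGamma_series a n) \<le> M"
    using convergent_imp_Bseq[OF convergentI[OF rGamma_series_LIMSEQ]] by (auto simp: Bseq_def)
  have rb: "rGamma b \<noteq> 0" using b by (simp add: rGamma_eq_zero_iff)
  have "(\<lambda>n. norm (rGamma_series b n)) \<longlonglongrightarrow> norm (rGamma b)"
    by (intro tendsto_intros rGamma_series_LIMSEQ)
  then have ev: "eventually (\<lambda>n. norm (rGamma_series b n) > norm (rGamma b) / 2) sequentially"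
    using rb by (intro order_tendstoD) auto
  have "eventually (\<lambda>n. norm (pochhammer a (Suc n) / pochhammer b (Suc n))
                         \<le> M / (norm (rGamma b) / 2) * real n powr (Re a - Re b)) sequentially"
    using ev eventually_gt_at_top[of 0]
  proof eventually_elim
    case (elim n)
    define E :: "complex \<Rightarrow> complex" where "E z = exp (z * of_real (ln (of_nat n)))" for z
    have "pochhammer a (Suc n) / pochhammer b (Suc n) = rGamma_series a n / rGamma_series b n * E (a - b)"
      unfolding pochhammer_Suc_eq_rGamma_series E_def by (simp add: exp_diff algebra_simps)
    moreover have "norm (E (a - b)) = real n powr (Re a - Re b)"
      using elim by (simp add: E_def powr_def)
    ultimately have "norm (pochhammer a (Suc n) / pochhammer b (Suc n))
        = norm (rGamma_series a n) / norm (rGamma_series b n) * real n powr (Re a - Re b)"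
      by (simp add: norm_divide norm_mult)
    also have "\<dots> \<le> M / (norm (rGamma b) / 2) * real n powr (Re a - Re b)"
      using elim M rb by (intro mult_right_mono frac_le) auto
    finally show ?case .
  qed
  then show ?thesis by blast
qed

lemma eventually_norm_mult_le_powr:
  fixes f g :: "nat \<Rightarrow> 'a :: real_normed_algebra"
  assumes "eventually (\<lambda>n. norm (f n) \<le> C1 * real n powr p) sequentially"
      and "eventually (\<lambda>n. norm (g n) \<le> C2 * real n powr q) sequentially"
  shows "eventually (\<lambda>n. norm (f n * g n) \<le> (C1 * C2) * real n powr (p + q)) sequentially"
  using assms eventually_gt_at_top[of 0]
proof eventually_elim
  case (elim n)
  have "norm (f n * g n) \<le> norm (f n) * norm (g n)" by (rule norm_mult_ineq)
  also have "\<dots> \<le> (C1 * real n powr p) * (C2 * real n powr q)"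
    using elim order_trans[OF norm_ge_zero elim(1)] by (intro mult_mono) auto
  also have "\<dots> = (C1 * C2) * real n powr (p + q)" by (simp add: powr_add)
  finally show ?case .
qed

lemma summable_if_eventually_norm_le_powr:
  fixes f :: "nat \<Rightarrow> 'a :: banach"
  assumes "eventually (\<lambda>n. norm (f (Suc n)) \<le> C * real n powr p) sequentially" and "p < -1"
  shows "summable f"
proof -
  have "summable (\<lambda>n. C * real n powr p)"
    using \<open>p < -1\<close> by (intro summable_mult) (simp add: summable_real_powr_iff)
  then have "summable (\<lambda>n. f (Suc n))"
    by (rule summable_comparison_test_ev[OF assms(1)])
  then show ?thesis by (simp add: summable_Suc_iff)
qed

lemma LIMSEQ_of_nat_mult_0_if_eventually_norm_le_powr:
  fixes f :: "nat \<Rightarrow> complex"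
  assumes "eventually (\<lambda>n. norm (f (Suc n)) \<le> C * real n powr p) sequentially" and "p < -1"
  shows "(\<lambda>n. of_nat n * f n) \<longlonglongrightarrow> 0"
proof -
  have "eventually (\<lambda>n. norm (of_nat (Suc n) * f (Suc n))
                         \<le> C * (real n powr (p + 1) + real n powr p)) sequentially"
    using assms(1) eventually_gt_at_top[of 0]
  proof eventually_elim
    case (elim n)
    have "norm (of_nat (Suc n) :: complex) = real n + 1"
      by (simp only: norm_of_nat)
    then have "norm (of_nat (Suc n) * f (Suc n)) = (real n + 1) * norm (f (Suc n))"
      by (simp only: norm_mult)
    also have "\<dots> \<le> (real n + 1) * (C * real n powr p)"
      using elim(1) by (intro mult_left_mono) auto
    also have "\<dots> = C * (real n powr (p + 1) + real n powr p)"
      using elim(2) by (simp add: powr_add algebra_simps)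
    finally show ?case .
  qed
  moreover have "(\<lambda>n. C * (real n powr (p + 1) + real n powr p)) \<longlonglongrightarrow> C * (0 + 0)"
    using \<open>p < -1\<close>
    by (intro tendsto_mult_left tendsto_add tendsto_neg_powr filterlim_real_sequentially) auto
  ultimately have "(\<lambda>n. of_nat (Suc n) * f (Suc n)) \<longlonglongrightarrow> 0"
    using Lim_null_comparison by fastforce
  then show ?thesis by (rule LIMSEQ_imp_Suc)
qed

lemma hyp2F1_term_0 [simp]: "hyp2F1_term a b c 0 = 1"
  by (simp add: hyp2F1_term_def)

lemma norm_hyp2F1_term_bound:
  assumes "c \<notin> \<int>\<^sub>\<le>\<^sub>0"
  shows "\<exists>C. eventually (\<lambda>n. norm (hyp2F1_term a b c (Suc n))
                               \<le> C * real n powr (Re a + Re b - Re c - 1)) sequentially"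
proof -
  obtain C1 where "eventually (\<lambda>n. norm (pochhammer a (Suc n) / pochhammer c (Suc n))
                                    \<le> C1 * real n powr (Re a - Re c)) sequentially"
    using norm_pochhammer_ratio_bound[OF assms] by blast
  moreover obtain C2 where "eventually (\<lambda>n. norm (pochhammer b (Suc n) / pochhammer 1 (Suc n))
                                    \<le> C2 * real n powr (Re b - Re 1)) sequentially"
    using norm_pochhammer_ratio_bound[of 1 b] by auto
  ultimately have "eventually (\<lambda>n. norm (pochhammer a (Suc n) / pochhammer c (Suc n)
        * (pochhammer b (Suc n) / pochhammer 1 (Suc n)))
        \<le> (C1 * C2) * real n powr ((Re a - Re c) + (Re b - Re 1))) sequentially"
    by (rule eventually_norm_mult_le_powr)
  moreover have "hyp2F1_term a b c (Suc n)
      = pochhammer a (Suc n) / pochhammer c (Suc n) * (pochhammer b (Suc n) / pochhammer 1 (Suc n))" for n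
    by (simp add: hyp2F1_term_def pochhammer_fact)
  ultimately show ?thesis by (intro exI[of _ "C1 * C2"]) (simp add: algebra_simps)
qed

lemma summable_hyp2F1_term:
  assumes "c \<notin> \<int>\<^sub>\<le>\<^sub>0" and "Re (c - a - b) > 0"
  shows "summable (hyp2F1_term a b c)"
proof -
  obtain C where "eventually (\<lambda>n. norm (hyp2F1_term a b c (Suc n))
                                 \<le> C * real n powr (Re a + Re b - Re c - 1)) sequentially"
    using norm_hyp2F1_term_bound[OF assms(1)] by blast
  then show ?thesis
    by (rule summable_if_eventually_norm_le_powr) (use assms(2) in simp)
qed

lemma summable_hyp3F2_term_1:
  assumes "b1 \<notin> \<int>\<^sub>\<le>\<^sub>0" and "b2 \<notin> \<int>\<^sub>\<le>\<^sub>0" and "Re (b1 + b2 - a1 - a2 - a3) > 0"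
  shows "summable (hyp3F2_term a1 a2 a3 b1 b2 1)"
proof -
  obtain C1 where "eventually (\<lambda>n. norm (pochhammer a1 (Suc n) / pochhammer b1 (Suc n))
                                    \<le> C1 * real n powr (Re a1 - Re b1)) sequentially"
    using norm_pochhammer_ratio_bound[OF assms(1)] by blast
  moreover obtain C2 where "eventually (\<lambda>n. norm (pochhammer a2 (Suc n) / pochhammer b2 (Suc n))
                                    \<le> C2 * real n powr (Re a2 - Re b2)) sequentially"
    using norm_pochhammer_ratio_bound[OF assms(2)] by blast
  moreover obtain C3 where "eventually (\<lambda>n. norm (pochhammer a3 (Suc n) / pochhammer 1 (Suc n))
                                    \<le> C3 * real n powr (Re a3 - Re 1)) sequentially"
    using norm_pochhammer_ratio_bound[of 1 a3] by auto
  ultimately have "eventually (\<lambda>n. norm (pochhammer a1 (Suc n) / pochhammer b1 (Suc n)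
      * (pochhammer a2 (Suc n) / pochhammer b2 (Suc n)) * (pochhammer a3 (Suc n) / pochhammer 1 (Suc n)))
      \<le> (C1 * C2 * C3) * real n powr ((Re a1 - Re b1) + (Re a2 - Re b2) + (Re a3 - Re 1))) sequentially"
    by (intro eventually_norm_mult_le_powr)
  moreover have "hyp3F2_term a1 a2 a3 b1 b2 1 (Suc n) = pochhammer a1 (Suc n) / pochhammer b1 (Suc n)
      * (pochhammer a2 (Suc n) / pochhammer b2 (Suc n)) * (pochhammer a3 (Suc n) / pochhammer 1 (Suc n))" for n
    by (simp add: hyp3F2_term_def pochhammer_fact)
  ultimately show ?thesis
    using assms(3) by (intro summable_if_eventually_norm_le_powr[where f = "hyp3F2_term a1 a2 a3 b1 b2 1"]) auto
qed

lemma hyp2F1_term_contiguous: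
  fixes a b c :: complex
  assumes c: "c \<notin> \<int>\<^sub>\<le>\<^sub>0"
  shows "c * (c - a - b) * hyp2F1_term a b c n - (c - a) * (c - b) * hyp2F1_term a b (c + 1) n
       = - c * of_nat (Suc n) * hyp2F1_term a b c (Suc n) + c * of_nat n * hyp2F1_term a b c n"
proof -
  define P Q R where "P = pochhammer a n" and "Q = pochhammer b n" and "R = pochhammer c n"
  define N :: complex where "N = of_nat n"
  have "c \<noteq> 0" using c by auto
  moreover have "c + N \<noteq> 0" using not_nonpos_Ints_add_of_nat[OF c, of n] by (auto simp: N_def)
  moreover have "R \<noteq> 0" using c by (auto simp: R_def pochhammer_eq_0_iff)
  moreover have "N + 1 \<noteq> 0" unfolding N_def by (metis of_nat_Suc of_nat_eq_0_iff nat.distinct(1) add.commute)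
  moreover have "pochhammer (c + 1) n = (c + N) * R / c"
    using pochhammer_rec[of c n] pochhammer_rec'[of c n] \<open>c \<noteq> 0\<close> by (simp add: N_def R_def field_simps)
  ultimately show ?thesis
    unfolding hyp2F1_term_def pochhammer_rec' fact_Suc of_nat_mult of_nat_Suc
    by (simp add: P_def[symmetric] Q_def[symmetric] R_def[symmetric] N_def[symmetric] divide_simps)
       algebra
qed

text \<open>Summing the telescoping relation above, whose boundary term \<open>n t\<^sub>n\<close> tends to \<open>0\<close>,
  gives Gauss's contiguous relation at \<open>z = 1\<close>.\<close>

lemma hyp2F1_at1_contiguous:
  fixes a b c :: complex
  assumes c: "c \<notin> \<int>\<^sub>\<le>\<^sub>0" and s: "Re (c - a - b) > 0"
  shows "c * (c - a - b) * hyp2F1_at1 a b c = (c - a) * (c - b) * hyp2F1_at1 a b (c + 1)"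
proof -
  define u where "u = hyp2F1_term a b c"
  define v where "v = hyp2F1_term a b (c + 1)"
  define w where "w n = - c * of_nat n * u n" for n
  have su: "summable u" unfolding u_def by (rule summable_hyp2F1_term[OF c s])
  have sv: "summable v"
    unfolding v_def using s not_nonpos_Ints_add_of_nat[OF c, of 1] by (intro summable_hyp2F1_term) auto
  have D: "(\<lambda>n. c * (c - a - b) * u n - (c - a) * (c - b) * v n) sums
      (c * (c - a - b) * suminf u - (c - a) * (c - b) * suminf v)"
    by (intro sums_diff sums_mult summable_sums su sv)
  obtain C where "eventually (\<lambda>n. norm (u (Suc n)) \<le> C * real n powr (Re a + Re b - Re c - 1)) sequentially"
    using norm_hyp2F1_term_bound[OF c] unfolding u_def by blast
  then have "(\<lambda>n. of_nat n * u n) \<longlonglongrightarrow> 0"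
    by (rule LIMSEQ_of_nat_mult_0_if_eventually_norm_le_powr) (use s in simp)
  then have "(\<lambda>N. w N - w 0) \<longlonglongrightarrow> 0"
    using tendsto_mult_left[of _ 0 _ "- c"] by (simp add: w_def mult.assoc)
  moreover have "(\<lambda>N. \<Sum>n<N. c * (c - a - b) * u n - (c - a) * (c - b) * v n) = (\<lambda>N. w N - w 0)"
    unfolding u_def v_def w_def hyp2F1_term_contiguous[OF c]
    by (rule ext, subst sum_lessThan_telescope[symmetric]) simp
  ultimately have "(\<lambda>n. c * (c - a - b) * u n - (c - a) * (c - b) * v n) sums 0"
    unfolding sums_def by simp
  with D have "c * (c - a - b) * suminf u - (c - a) * (c - b) * suminf v = 0"
    using sums_unique2 by blast
  then show ?thesis unfolding hyp2F1_at1_def u_def v_def by simp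
qed

definition gauss_shift_factor :: "complex \<Rightarrow> complex \<Rightarrow> complex \<Rightarrow> nat \<Rightarrow> complex" where
  "gauss_shift_factor a b c m =
     pochhammer (c - a) m * pochhammer (c - b) m / (pochhammer c m * pochhammer (c - a - b) m)"

lemma hyp2F1_at1_eq_shift:
  fixes a b c :: complex
  assumes c: "c \<notin> \<int>\<^sub>\<le>\<^sub>0" and s: "Re (c - a - b) > 0"
  shows "hyp2F1_at1 a b c = gauss_shift_factor a b c m * hyp2F1_at1 a b (c + of_nat m)"
proof (induction m)
  case 0
  then show ?case by (simp add: gauss_shift_factor_def)
next
  case (Suc m)
  define c' where "c' = c + of_nat m"
  have c': "c' \<notin> \<int>\<^sub>\<le>\<^sub>0" unfolding c'_def by (rule not_nonpos_Ints_add_of_nat[OF c])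
  have s': "Re (c' - a - b) > 0" using s by (simp add: c'_def)
  have "c' * (c' - a - b) \<noteq> 0" using c' s' by auto
  then have F: "hyp2F1_at1 a b c' = (c' - a) * (c' - b) / (c' * (c' - a - b)) * hyp2F1_at1 a b (c' + 1)"
    using hyp2F1_at1_contiguous[OF c' s'] by (simp add: field_simps)
  have "c - a + of_nat m = c' - a" "c - b + of_nat m = c' - b" "c + of_nat m = c'"
       "c - a - b + of_nat m = c' - a - b"
    by (simp_all add: c'_def algebra_simps)
  then have "gauss_shift_factor a b c (Suc m)
      = gauss_shift_factor a b c m * ((c' - a) * (c' - b) / (c' * (c' - a - b)))"
    unfolding gauss_shift_factor_def pochhammer_rec' by (simp only: times_divide_times_eq ac_simps)
  then show ?case
    using Suc.IH unfolding F[unfolded c'_def] by (simp add: c'_def algebra_simps)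
qed

lemma gauss_shift_factor_LIMSEQ:
  fixes a b c :: complex
  assumes c: "c \<notin> \<int>\<^sub>\<le>\<^sub>0" and s: "Re (c - a - b) > 0"
  shows "gauss_shift_factor a b c \<longlonglongrightarrow> Gamma c * Gamma (c - a - b) * rGamma (c - a) * rGamma (c - b)"
proof -
  have r1: "rGamma c \<noteq> 0" using c by (simp add: rGamma_eq_zero_iff)
  have r2: "rGamma (c - a - b) \<noteq> 0"
    using not_nonpos_Ints_if_Re_pos[OF s] by (simp add: rGamma_eq_zero_iff)
  have "gauss_shift_factor a b c (Suc m) = rGamma_series (c - a) m * rGamma_series (c - b) m /
          (rGamma_series c m * rGamma_series (c - a - b) m)" for m
  proof -
    define E :: "complex \<Rightarrow> complex" where "E z = fact m * exp (z * of_real (ln (of_nat m)))" for z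
    have EE: "E (c - a) * E (c - b) = E c * E (c - a - b)"
      unfolding E_def by (simp add: exp_add[symmetric] algebra_simps)
    have "gauss_shift_factor a b c (Suc m)
        = (rGamma_series (c - a) m * rGamma_series (c - b) m) * (E (c - a) * E (c - b)) /
          ((rGamma_series c m * rGamma_series (c - a - b) m) * (E c * E (c - a - b)))"
      unfolding gauss_shift_factor_def pochhammer_Suc_eq_rGamma_series E_def[symmetric]
      by (simp add: ac_simps)
    also have "\<dots> = rGamma_series (c - a) m * rGamma_series (c - b) m /
          (rGamma_series c m * rGamma_series (c - a - b) m)"
      unfolding EE by (simp add: E_def)
    finally show ?thesis .
  qed
  then have "(\<lambda>m. gauss_shift_factor a b c (Suc m))
      \<longlonglongrightarrow> rGamma (c - a) * rGamma (c - b) / (rGamma c * rGamma (c - a - b))"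
    using r1 r2 by (simp only:) (intro tendsto_intros; simp)
  also have "rGamma (c - a) * rGamma (c - b) / (rGamma c * rGamma (c - a - b)) =
       Gamma c * Gamma (c - a - b) * rGamma (c - a) * rGamma (c - b)"
    using r1 r2 by (simp add: rGamma_inverse_Gamma field_simps)
  finally show ?thesis by (rule LIMSEQ_imp_Suc)
qed

lemma norm_pochhammer_le: "norm (pochhammer (z :: 'a :: real_normed_field) n) \<le> pochhammer (norm z) n"
proof (induction n)
  case (Suc n)
  have "norm (pochhammer z (Suc n)) = norm (z + of_nat n) * norm (pochhammer z n)"
    by (simp add: pochhammer_rec' norm_mult)
  also have "\<dots> \<le> (norm z + real n) * pochhammer (norm z) n"
    using Suc norm_triangle_ineq[of z "of_nat n"] by (intro mult_mono) auto
  also have "\<dots> = pochhammer (norm z) (Suc n)" by (simp add: pochhammer_rec')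
  finally show ?case .
qed simp

lemma pochhammer_Re_le_norm:
  assumes "Re (z :: complex) > 0"
  shows "pochhammer (Re z) n \<le> norm (pochhammer z n)"
proof (induction n)
  case (Suc n)
  have "pochhammer (Re z) (Suc n) = (Re z + real n) * pochhammer (Re z) n"
    by (simp add: pochhammer_rec')
  also have "\<dots> \<le> norm (z + of_nat n) * norm (pochhammer z n)"
    using Suc assms complex_Re_le_cmod[of "z + of_nat n"]
    by (intro mult_mono) (auto intro: pochhammer_nonneg)
  also have "\<dots> = norm (pochhammer z (Suc n))" by (simp add: pochhammer_rec' norm_mult)
  finally show ?case .
qed simp

lemma pochhammer_mono:
  assumes "0 < x" "x \<le> (y :: real)"
  shows "pochhammer x n \<le> pochhammer y n"
proof (induction n)
  case (Suc n)
  then show ?case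
    using assms by (simp add: pochhammer_rec') (intro mult_mono; auto intro: pochhammer_nonneg)
qed simp

lemma norm_hyp2F1_term_Suc_le:
  fixes a b c :: complex and x :: real
  assumes x: "0 < x" "x \<le> Re c"
  shows "norm (hyp2F1_term a b c (Suc n)) \<le> norm a * norm b / Re c *
           (pochhammer (norm a + 1) n * pochhammer (norm b + 1) n / (pochhammer (x + 1) n * fact n))"
proof -
  define A B where "A = norm a" and "B = norm b"
  have A0: "A \<ge> 0" and B0: "B \<ge> 0" by (simp_all add: A_def B_def)
  have px: "0 < pochhammer (x + 1) n" using x by (intro pochhammer_pos) simp
  have na: "norm (pochhammer a (Suc n)) \<le> A * pochhammer (A + 1) n"
    using norm_pochhammer_le[of a "Suc n"] by (simp add: A_def pochhammer_rec)
  have nb: "norm (pochhammer b (Suc n)) \<le> B * pochhammer (B + 1) n"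
    using norm_pochhammer_le[of b "Suc n"] by (simp add: B_def pochhammer_rec)
  have "Re c * pochhammer (x + 1) n \<le> Re c * pochhammer (Re c + 1) n"
    using x by (intro mult_left_mono pochhammer_mono) auto
  also have "\<dots> = pochhammer (Re c) (Suc n)" by (simp add: pochhammer_rec)
  also have "\<dots> \<le> norm (pochhammer c (Suc n))"
    using x by (intro pochhammer_Re_le_norm) simp
  finally have nc: "Re c * pochhammer (x + 1) n \<le> norm (pochhammer c (Suc n))" .
  have "norm (hyp2F1_term a b c (Suc n)) =
      norm (pochhammer a (Suc n)) * norm (pochhammer b (Suc n)) / (norm (pochhammer c (Suc n)) * fact (Suc n))"
    using norm_of_nat[of "fact (Suc n)", where 'a = complex]
    by (simp only: hyp2F1_term_def norm_mult norm_divide of_nat_fact)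
  also have "\<dots> \<le> (A * pochhammer (A + 1) n) * (B * pochhammer (B + 1) n)
                    / ((Re c * pochhammer (x + 1) n) * fact n)"
  proof (rule frac_le)
    show "0 \<le> A * pochhammer (A + 1) n * (B * pochhammer (B + 1) n)"
      using A0 B0 by (intro mult_nonneg_nonneg pochhammer_nonneg) auto
    show "norm (pochhammer a (Suc n)) * norm (pochhammer b (Suc n))
            \<le> A * pochhammer (A + 1) n * (B * pochhammer (B + 1) n)"
      using na nb A0 by (intro mult_mono) (auto intro!: mult_nonneg_nonneg pochhammer_nonneg)
    show "0 < Re c * pochhammer (x + 1) n * fact n" using x px by simp
    show "Re c * pochhammer (x + 1) n * fact n \<le> norm (pochhammer c (Suc n)) * fact (Suc n)"
      using nc x px fact_mono[of n "Suc n"] by (intro mult_mono) auto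
  qed
  also have "\<dots> = A * B / Re c *
      (pochhammer (A + 1) n * pochhammer (B + 1) n / (pochhammer (x + 1) n * fact n))"
    by (simp add: field_simps)
  finally show ?thesis by (simp add: A_def B_def)
qed

lemma summable_pochhammer_ratio_real:
  fixes A B x :: real
  assumes "0 < x" and "A + B + 1 < x"
  shows "summable (\<lambda>n. pochhammer (A + 1) n * pochhammer (B + 1) n / (pochhammer (x + 1) n * fact n))"
proof -
  have "summable (hyp2F1_term (of_real (A + 1)) (of_real (B + 1)) (of_real (x + 1)))"
    using assms by (intro summable_hyp2F1_term not_nonpos_Ints_if_Re_pos) auto
  moreover have "hyp2F1_term (of_real (A + 1)) (of_real (B + 1)) (of_real (x + 1))
      = (\<lambda>n. of_real (pochhammer (A + 1) n * pochhammer (B + 1) n / (pochhammer (x + 1) n * fact n)))"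
    by (rule ext) (simp only: hyp2F1_term_def pochhammer_of_real of_real_mult of_real_divide of_real_fact)
  ultimately show ?thesis by (simp only: summable_complex_of_real)
qed

lemma hyp2F1_at1_shift_LIMSEQ:
  fixes a b c :: complex
  assumes c: "c \<notin> \<int>\<^sub>\<le>\<^sub>0" and s: "Re (c - a - b) > 0"
  shows "(\<lambda>m. hyp2F1_at1 a b (c + of_nat m)) \<longlonglongrightarrow> 1"
proof -
  obtain m0 :: nat where m0: "norm a + norm b + 2 - Re c < real m0"
    using reals_Archimedean2 by blast
  define x where "x = Re c + real m0"
  have x: "0 < x" "norm a + norm b + 1 < x"
    using m0 norm_ge_zero[of a] norm_ge_zero[of b] unfolding x_def by linarith+
  define g where "g n = pochhammer (norm a + 1) n * pochhammer (norm b + 1) n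
                        / (pochhammer (x + 1) n * fact n)" for n
  have sg: "summable g" unfolding g_def using x by (rule summable_pochhammer_ratio_real)
  have bound: "norm (hyp2F1_at1 a b (c + of_nat m) - 1) \<le> norm a * norm b / (Re c + real m) * suminf g"
    if "m \<ge> m0" for m
  proof -
    have x_le: "x \<le> Re (c + of_nat m)" using that by (simp add: x_def)
    have "summable (hyp2F1_term a b (c + of_nat m))"
      using s by (intro summable_hyp2F1_term not_nonpos_Ints_add_of_nat[OF c]) auto
    then have "hyp2F1_at1 a b (c + of_nat m) - 1 = (\<Sum>n. hyp2F1_term a b (c + of_nat m) (Suc n))"
      unfolding hyp2F1_at1_def by (simp add: suminf_split_head)
    also have "norm \<dots> \<le> (\<Sum>n. norm a * norm b / Re (c + of_nat m) * g n)"
    proof (rule norm_suminf_le[OF _ summable_mult[OF sg]])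
      show "norm (hyp2F1_term a b (c + of_nat m) (Suc n)) \<le> norm a * norm b / Re (c + of_nat m) * g n"
        for n unfolding g_def by (rule norm_hyp2F1_term_Suc_le[OF x(1) x_le])
    qed
    also have "\<dots> = norm a * norm b / Re (c + of_nat m) * suminf g"
      by (rule suminf_mult[OF sg])
    finally show ?thesis by (simp only: plus_complex.sel complex_Re_of_nat)
  qed
  have "(\<lambda>m. norm a * norm b / (Re c + real m)) \<longlonglongrightarrow> 0"
    by (intro tendsto_divide_0[OF tendsto_const] filterlim_at_top_imp_at_infinity
              filterlim_tendsto_add_at_top[OF tendsto_const filterlim_real_sequentially])
  then have lim: "(\<lambda>m. norm a * norm b / (Re c + real m) * suminf g) \<longlonglongrightarrow> 0"
    by (rule tendsto_mult_left_zero)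
  have "eventually (\<lambda>m. norm (hyp2F1_at1 a b (c + of_nat m) - 1)
                   \<le> norm a * norm b / (Re c + real m) * suminf g) sequentially"
    using eventually_ge_at_top[of m0] by eventually_elim (rule bound)
  then have "(\<lambda>m. hyp2F1_at1 a b (c + of_nat m) - 1) \<longlonglongrightarrow> 0"
    using lim by (rule Lim_null_comparison)
  then show ?thesis by (simp add: LIM_zero_iff)
qed

theorem gauss_summation:
  fixes a b c :: complex
  assumes c: "c \<notin> \<int>\<^sub>\<le>\<^sub>0" and s: "Re (c - a - b) > 0"
  shows "hyp2F1_at1 a b c = Gamma c * Gamma (c - a - b) * rGamma (c - a) * rGamma (c - b)"
proof -
  have "(\<lambda>m. gauss_shift_factor a b c m * hyp2F1_at1 a b (c + of_nat m))
      \<longlonglongrightarrow> Gamma c * Gamma (c - a - b) * rGamma (c - a) * rGamma (c - b) * 1"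
    by (intro tendsto_mult gauss_shift_factor_LIMSEQ hyp2F1_at1_shift_LIMSEQ c s)
  then show ?thesis
    unfolding hyp2F1_at1_eq_shift[OF c s, symmetric] by (simp add: LIMSEQ_const_iff)
qed

lemma Gamma_add_of_nat:
  fixes z :: complex
  assumes "z \<notin> \<int>\<^sub>\<le>\<^sub>0"
  shows "Gamma (z + of_nat n) = Gamma z * pochhammer z n"
  using pochhammer_Gamma[OF assms, of n] assms by (simp add: Gamma_eq_zero_iff field_simps)

text \<open>Division-free form of Gauss's theorem at \<open>c + n\<close>: the factors \<open>(c - a)\<^sub>n\<close>, \<open>(c - b)\<^sub>n\<close>
  may vanish, and then they cancel against zeros of the coefficients \<open>a\<^sub>k\<close>.\<close>

lemma gauss_summation_add_of_nat:
  fixes a b c :: complex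
  assumes c: "c \<notin> \<int>\<^sub>\<le>\<^sub>0" and s: "Re (c - a - b) > 0"
  shows "pochhammer (c - a) n * pochhammer (c - b) n * hyp2F1_at1 a b (c + of_nat n)
       = pochhammer c n * pochhammer (c - a - b) n
         * (Gamma c * Gamma (c - a - b) * rGamma (c - a) * rGamma (c - b))"
proof -
  have "hyp2F1_at1 a b (c + of_nat n) = Gamma c * pochhammer c n * (Gamma (c - a - b) * pochhammer (c - a - b) n)
      * rGamma (c - a + of_nat n) * rGamma (c - b + of_nat n)"
    using gauss_summation[OF not_nonpos_Ints_add_of_nat[OF c, of n], of a b] s
      Gamma_add_of_nat[OF c, of n] Gamma_add_of_nat[OF not_nonpos_Ints_if_Re_pos[OF s], of n]
    by (simp add: algebra_simps)
  then show ?thesis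
    unfolding pochhammer_rGamma[of "c - a" n] pochhammer_rGamma[of "c - b" n] by (simp add: ac_simps)
qed

lemma pochhammer_double_halves:
  fixes w :: complex
  shows "pochhammer w (2 * k) = 4 ^ k * pochhammer (w / 2) k * pochhammer ((w + 1) / 2) k"
  using pochhammer_double[of "w / 2" k] by (simp add: power_mult add_divide_distrib)

lemma coeff_mult_hyp2F1_at1_eq_hyp3F2_term:
  fixes \<alpha> \<beta> \<gamma> \<epsilon> :: complex
  assumes eps: "\<epsilon> = \<alpha> + \<beta> - 1" and g: "Re \<gamma> > 1" and c: "\<gamma> + \<epsilon> \<notin> \<int>\<^sub>\<le>\<^sub>0"
    and ga: "(\<gamma> + \<alpha>) / 2 \<notin> \<int>\<^sub>\<le>\<^sub>0" and gb: "(\<gamma> + \<beta>) / 2 \<notin> \<int>\<^sub>\<le>\<^sub>0"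
  shows "pochhammer (\<epsilon> / 2) k * pochhammer ((\<gamma> + \<epsilon> - \<alpha>) / 2) k * pochhammer ((\<gamma> + \<epsilon> - \<beta>) / 2) k
           / (fact k * pochhammer ((\<gamma> + \<epsilon>) / 2) k * pochhammer ((1 + \<gamma> + \<epsilon>) / 2) k)
         * hyp2F1_at1 \<alpha> \<beta> (\<gamma> + \<epsilon> + 2 * of_nat k)
       = Gamma (\<gamma> + \<epsilon>) * Gamma (\<gamma> - 1) * rGamma (\<gamma> + \<epsilon> - \<alpha>) * rGamma (\<gamma> - 1 + \<alpha>)
         * hyp3F2_term ((\<gamma> - 1) / 2) (\<gamma> / 2) (\<epsilon> / 2) ((\<gamma> + \<alpha>) / 2) ((\<gamma> + \<beta>) / 2) 1 k"
proof -
  define K where "K = Gamma (\<gamma> + \<epsilon>) * Gamma (\<gamma> - 1) * rGamma (\<gamma> + \<epsilon> - \<alpha>) * rGamma (\<gamma> - 1 + \<alpha>)"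
  define F where "F = hyp2F1_at1 \<alpha> \<beta> (\<gamma> + \<epsilon> + 2 * of_nat k)"
  have "pochhammer (\<gamma> + \<epsilon> - \<alpha>) (2 * k) * pochhammer (\<gamma> - 1 + \<alpha>) (2 * k) * F
      = pochhammer (\<gamma> + \<epsilon>) (2 * k) * pochhammer (\<gamma> - 1) (2 * k) * K"
    using gauss_summation_add_of_nat[OF c, of \<alpha> \<beta> "2 * k"] g
    by (simp add: eps K_def F_def algebra_simps)
  moreover have "pochhammer (\<gamma> + \<epsilon> - \<alpha>) (2 * k)
      = 4 ^ k * pochhammer ((\<gamma> + \<epsilon> - \<alpha>) / 2) k * pochhammer ((\<gamma> + \<beta>) / 2) k"
  proof -
    have "(\<gamma> + \<epsilon> - \<alpha> + 1) / 2 = (\<gamma> + \<beta>) / 2" by (simp add: eps field_simps)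
    with pochhammer_double_halves[of "\<gamma> + \<epsilon> - \<alpha>" k] show ?thesis by (simp only:)
  qed
  moreover have "pochhammer (\<gamma> - 1 + \<alpha>) (2 * k)
      = 4 ^ k * pochhammer ((\<gamma> + \<epsilon> - \<beta>) / 2) k * pochhammer ((\<gamma> + \<alpha>) / 2) k"
  proof -
    have "(\<gamma> - 1 + \<alpha>) / 2 = (\<gamma> + \<epsilon> - \<beta>) / 2" "(\<gamma> - 1 + \<alpha> + 1) / 2 = (\<gamma> + \<alpha>) / 2"
      by (simp_all add: eps field_simps)
    with pochhammer_double_halves[of "\<gamma> - 1 + \<alpha>" k] show ?thesis by (simp only:)
  qed
  moreover have dup_c: "pochhammer (\<gamma> + \<epsilon>) (2 * k)
      = 4 ^ k * pochhammer ((\<gamma> + \<epsilon>) / 2) k * pochhammer ((1 + \<gamma> + \<epsilon>) / 2) k"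
    using pochhammer_double_halves[of "\<gamma> + \<epsilon>" k] by (simp add: add.commute add.left_commute)
  moreover have "pochhammer (\<gamma> - 1) (2 * k) = 4 ^ k * pochhammer ((\<gamma> - 1) / 2) k * pochhammer (\<gamma> / 2) k"
    using pochhammer_double_halves[of "\<gamma> - 1" k] by simp
  ultimately have eq: "pochhammer ((\<gamma> + \<epsilon> - \<alpha>) / 2) k * pochhammer ((\<gamma> + \<beta>) / 2) k
        * pochhammer ((\<gamma> + \<epsilon> - \<beta>) / 2) k * pochhammer ((\<gamma> + \<alpha>) / 2) k * F
      = pochhammer ((\<gamma> + \<epsilon>) / 2) k * pochhammer ((1 + \<gamma> + \<epsilon>) / 2) k
        * pochhammer ((\<gamma> - 1) / 2) k * pochhammer (\<gamma> / 2) k * K"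
    by (simp add: ac_simps)
  have "pochhammer (\<gamma> + \<epsilon>) (2 * k) \<noteq> 0"
    using c by (auto simp: pochhammer_eq_0_iff)
  then have "pochhammer ((\<gamma> + \<epsilon>) / 2) k \<noteq> 0" "pochhammer ((1 + \<gamma> + \<epsilon>) / 2) k \<noteq> 0"
    unfolding dup_c by simp_all
  moreover have "pochhammer ((\<gamma> + \<alpha>) / 2) k \<noteq> 0" "pochhammer ((\<gamma> + \<beta>) / 2) k \<noteq> 0"
    using ga gb by (auto simp: pochhammer_eq_0_iff)
  ultimately show ?thesis
    using eq unfolding K_def[symmetric] F_def[symmetric] hyp3F2_term_def
    by (simp add: field_simps)
qed

theorem mainTheorem6:
  fixes \<alpha> \<beta> \<gamma> \<delta> \<epsilon> :: complex
  assumes "\<gamma> + \<delta> = 2"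
    and "1 + \<alpha> + \<beta> = \<gamma> + \<delta> + \<epsilon>"
    and "\<alpha> * \<beta> \<noteq> 0"
    and "\<gamma> + \<epsilon> \<notin> \<int>\<^sub>\<le>\<^sub>0"
    and "Re \<gamma> > 1"
    and "(\<gamma> + \<alpha>) / 2 \<notin> \<int>\<^sub>\<le>\<^sub>0"
    and "(\<gamma> + \<beta>) / 2 \<notin> \<int>\<^sub>\<le>\<^sub>0"
  defines "a \<equiv> (\<lambda>k::nat. pochhammer (\<epsilon> / 2) k * pochhammer ((\<gamma> + \<epsilon> - \<alpha>) / 2) k
                     * pochhammer ((\<gamma> + \<epsilon> - \<beta>) / 2) k
                   / (fact k * pochhammer ((\<gamma> + \<epsilon>) / 2) k * pochhammer ((1 + \<gamma> + \<epsilon>) / 2) k))"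
  shows "(\<forall>k. summable (hyp2F1_term \<alpha> \<beta> (\<gamma> + \<epsilon> + 2 * of_nat k)))
    \<and> summable (\<lambda>k. a k * hyp2F1_at1 \<alpha> \<beta> (\<gamma> + \<epsilon> + 2 * of_nat k))
    \<and> (\<Sum>k. a k * hyp2F1_at1 \<alpha> \<beta> (\<gamma> + \<epsilon> + 2 * of_nat k))
        = Gamma (\<gamma> + \<epsilon>) * Gamma (\<gamma> - 1) * rGamma (\<gamma> + \<epsilon> - \<alpha>) * rGamma (\<gamma> - 1 + \<alpha>)
          * hyp3F2 ((\<gamma> - 1) / 2) (\<gamma> / 2) (\<epsilon> / 2) ((\<gamma> + \<alpha>) / 2) ((\<gamma> + \<beta>) / 2) 1"
proof -
  have eps: "\<epsilon> = \<alpha> + \<beta> - 1" using assms(1,2) by (simp add: algebra_simps)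
  define K where "K = Gamma (\<gamma> + \<epsilon>) * Gamma (\<gamma> - 1) * rGamma (\<gamma> + \<epsilon> - \<alpha>) * rGamma (\<gamma> - 1 + \<alpha>)"
  define T where "T = hyp3F2_term ((\<gamma> - 1) / 2) (\<gamma> / 2) (\<epsilon> / 2) ((\<gamma> + \<alpha>) / 2) ((\<gamma> + \<beta>) / 2) 1"
  have "summable (hyp2F1_term \<alpha> \<beta> (\<gamma> + \<epsilon> + of_nat (2 * k)))" for k
    using assms(5) by (intro summable_hyp2F1_term not_nonpos_Ints_add_of_nat assms(4)) (simp add: eps)
  moreover have "summable T"
    unfolding T_def using assms(6,7) by (intro summable_hyp3F2_term_1) (auto simp: eps field_simps)
  moreover have "(\<lambda>k. a k * hyp2F1_at1 \<alpha> \<beta> (\<gamma> + \<epsilon> + 2 * of_nat k)) = (\<lambda>k. K * T k)"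
    unfolding a_def K_def T_def
    by (intro ext coeff_mult_hyp2F1_at1_eq_hyp3F2_term[OF eps assms(5,4,6,7)])
  ultimately show ?thesis
    by (simp add: summable_mult suminf_mult K_def T_def hyp3F2_def)
qed

end
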